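(* Suppose $g(S) = \sum_{v \in S} w(v)$ for nonnegative weights $w : V \to \mathbb{R}_{\ge 0}$. For every $\varepsilon > 0$, the algorithm $\mathrm{GIST}(V,g,k,\varepsilon)$ returns a set $S \subseteq V$ with $|S| \le k$ and $$f(S) \ge \left(\tfrac{2}{3} - \varepsilon\right)\cdot \mathrm{OPT}.$$
   Context: Let $V$ be a finite set of $n$ points in a metric space with metric $\mathrm{dist}$, and let $d_{\max} = \max_{u,v \in V}\mathrm{dist}(u,v)$. For $u \in V$ and $S \subseteq V$ let $\mathrm{dist}(u,S) = \min_{v \in S}\mathrm{dist}(u,v)$, with $\mathrm{dist}(u,\emptyset) = \infty$. The max-min diversity is $\mathrm{div}(S) = \min_{u,v \in S,\, u \ne v}\mathrm{dist}(u,v)$ if $|S| \ge 2$, and $\mathrm{div}(S) = d_{\max}$ if $|S| \le 1$. Let $g : 2^V \to \mathbb{R}_{\ge 0}$ be a nonnegative monotone submodular function, let $\lambda \ge 0$, let $k \ge 1$ be an integer, and let $f(S) = g(S) + \lambda\cdot \mathrm{div}(S)$. The MDMS problem is to maximize $f(S)$ subject to $S \subseteq V$, $|S| \le k$; $\mathrm{OPT}$ denotes the optimal value. $\mathrm{GreedyIndependentSet}(V,g,d,k)$: initialize $S \gets \emptyset$; for $i = 1,\dots,k$: let $C = \{v \in V\setminus S : \mathrm{dist}(v,S) \ge d\}$; if $C = \emptyset$ return $S$; otherwise pick $t \in \arg\max_{v \in C} \big(g(S\cup\{v\}) - g(S)\big)$ (ties broken arbitrarily) and set $S \gets S \cup\{t\}$.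 After the loop, return $S$. $\mathrm{GIST}(V,g,k,\varepsilon)$: set $S \gets \mathrm{GreedyIndependentSet}(V,g,0,k)$. Let $T = \{u,v\}$ be two points with $\mathrm{dist}(u,v) = d_{\max}$; if $f(T) > f(S)$ and $k \ge 2$, set $S \gets T$. Let $D = \{(1+\varepsilon)^i \cdot \varepsilon d_{\max}/2 : i \in \mathbb{Z}_{\ge 0},\ (1+\varepsilon)^i \le 2/\varepsilon\}$. For each $d \in D$: set $T \gets \mathrm{GreedyIndependentSet}(V,g,d,k)$ and if $f(T) \ge f(S)$ set $S \gets T$. Return $S$. *)

theory Defs
  imports "HOL-Analysis.Analysis"
begin

definition dmax :: "'a set \<Rightarrow> ('a \<Rightarrow> 'a \<Rightarrow> real) \<Rightarrow> real" where
  "dmax V d = Max {d u v | u v. u \<in> V \<and> v \<in> V}"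

definition divers :: "'a set \<Rightarrow> ('a \<Rightarrow> 'a \<Rightarrow> real) \<Rightarrow> 'a set \<Rightarrow> real" where
  "divers V d S = (if card S \<ge> 2 then Min {d u v | u v. u \<in> S \<and> v \<in> S \<and> u \<noteq> v}
                   else dmax V d)"

definition fobj :: "'a set \<Rightarrow> ('a \<Rightarrow> 'a \<Rightarrow> real) \<Rightarrow> ('a set \<Rightarrow> real) \<Rightarrow> real \<Rightarrow> 'a set \<Rightarrow> real" where
  "fobj V d g lam S = g S + lam * divers V d S"

definition OPT :: "'a set \<Rightarrow> ('a \<Rightarrow> 'a \<Rightarrow> real) \<Rightarrow> ('a set \<Rightarrow> real) \<Rightarrow> real \<Rightarrow> nat \<Rightarrow> real" where
  "OPT V d g lam k = Max {fobj V d g lam S | S. S \<subseteq> V \<and> card S \<le> k}"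

definition cand :: "'a set \<Rightarrow> ('a \<Rightarrow> 'a \<Rightarrow> real) \<Rightarrow> real \<Rightarrow> 'a set \<Rightarrow> 'a set" where
  "cand V d thr S = {v \<in> V - S. \<forall>u\<in>S. thr \<le> d v u}"

text \<open>States reachable after i iterations of the loop of GreedyIndependentSet
  (any tie-breaking), without having returned early.\<close>
inductive gis_reach :: "'a set \<Rightarrow> ('a \<Rightarrow> 'a \<Rightarrow> real) \<Rightarrow> ('a set \<Rightarrow> real) \<Rightarrow> real \<Rightarrow> nat
    \<Rightarrow> nat \<Rightarrow> 'a set \<Rightarrow> bool"
  for V d g thr k where
  start: "gis_reach V d g thr k 0 {}"
| step: "\<lbrakk> gis_reach V d g thr k i S; i < k; t \<in> cand V d thr S;
           \<forall>v \<in> cand V d thr S. g (insert v S) - g S \<le> g (insert t S) - g S \<rbrakk>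
         \<Longrightarrow> gis_reach V d g thr k (Suc i) (insert t S)"

definition gis_out :: "'a set \<Rightarrow> ('a \<Rightarrow> 'a \<Rightarrow> real) \<Rightarrow> ('a set \<Rightarrow> real) \<Rightarrow> real \<Rightarrow> nat
    \<Rightarrow> 'a set \<Rightarrow> bool" where
  "gis_out V d g thr k S \<longleftrightarrow>
     gis_reach V d g thr k k S \<or> (\<exists>i<k. gis_reach V d g thr k i S \<and> cand V d thr S = {})"

definition thresholds :: "'a set \<Rightarrow> ('a \<Rightarrow> 'a \<Rightarrow> real) \<Rightarrow> real \<Rightarrow> real set" where
  "thresholds V d eps = {(1 + eps) ^ i * eps * dmax V d / 2 | i::nat. (1 + eps) ^ i \<le> 2 / eps}"

text \<open>The loop over D (in increasing order): current set S, remaining thresholds, final set.\<close>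
inductive gist_loop :: "'a set \<Rightarrow> ('a \<Rightarrow> 'a \<Rightarrow> real) \<Rightarrow> ('a set \<Rightarrow> real) \<Rightarrow> real \<Rightarrow> nat
    \<Rightarrow> 'a set \<Rightarrow> real list \<Rightarrow> 'a set \<Rightarrow> bool"
  for V d g lam k where
  nil: "gist_loop V d g lam k S [] S"
| cons: "\<lbrakk> gis_out V d g thr k T;
           gist_loop V d g lam k
             (if fobj V d g lam T \<ge> fobj V d g lam S then T else S) ds R \<rbrakk>
         \<Longrightarrow> gist_loop V d g lam k S (thr # ds) R"

text \<open>Possible outputs of GIST(V,g,k,eps) (over all tie-breaking choices and
  all choices of the diametral pair).\<close>
definition gist_out :: "'a set \<Rightarrow> ('a \<Rightarrow> 'a \<Rightarrow> real) \<Rightarrow> ('a set \<Rightarrow> real) \<Rightarrow> real \<Rightarrow> nat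
    \<Rightarrow> real \<Rightarrow> 'a set \<Rightarrow> bool" where
  "gist_out V d g lam k eps R \<longleftrightarrow>
     (\<exists>S0 u v. gis_out V d g 0 k S0 \<and> u \<in> V \<and> v \<in> V \<and> d u v = dmax V d \<and>
        gist_loop V d g lam k
          (if fobj V d g lam {u, v} > fobj V d g lam S0 \<and> k \<ge> 2 then {u, v} else S0)
          (sorted_list_of_set (thresholds V d eps)) R)"

end

theory Submission
  imports Defs
begin

text \<open>Let \<open>O\<close> be an optimal set. Greedy selection with threshold \<open>thr\<close>, compared with any
  \<open>2 thr\<close>-separated set \<open>Q\<close> of at most \<open>k\<close> points, collects at least the weight of \<open>Q\<close>:
  every pick rules out at most one point of \<open>Q\<close>, and that point weighs no more than the pick.
  The unthresholded run therefore gives \<open>f S \<ge> w(O)\<close>, and for \<open>k \<ge> 2\<close> the diametral pair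
  gives \<open>f S \<ge> \<lambda> dmax\<close>. If \<open>div O \<le> \<epsilon> dmax\<close>, these two bounds give
  \<open>OPT \<le> (1 + \<epsilon>) f S\<close>. Otherwise some threshold satisfies
  \<open>2 thr \<le> div O \<le> 2 (1 + \<epsilon>) thr\<close>; its greedy run has diversity at least \<open>thr\<close>, so
  \<open>f S \<ge> w(O) + \<lambda> thr\<close>, and averaging with \<open>f S \<ge> \<lambda> div O\<close> yields \<open>(2/3 - \<epsilon>) OPT\<close>.\<close>

definition separated :: "('a \<Rightarrow> 'a \<Rightarrow> real) \<Rightarrow> real \<Rightarrow> 'a set \<Rightarrow> bool" where
  "separated d r Q \<longleftrightarrow> (\<forall>x\<in>Q. \<forall>y\<in>Q. x \<noteq> y \<longrightarrow> r \<le> d x y)"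

definition blocked :: "'a set \<Rightarrow> ('a \<Rightarrow> 'a \<Rightarrow> real) \<Rightarrow> real \<Rightarrow> 'a set \<Rightarrow> 'a set" where
  "blocked Q d thr S = {x\<in>Q. \<exists>t\<in>S. x = t \<or> d x t < thr}"

lemma separated_mono: "separated d r Q \<Longrightarrow> r' \<le> r \<Longrightarrow> separated d r' Q"
  unfolding separated_def by (meson order_trans)

lemma cand_iff_not_blocked:
  "Q \<subseteq> V \<Longrightarrow> x \<in> Q \<Longrightarrow> x \<in> cand V d thr S \<longleftrightarrow> x \<notin> blocked Q d thr S"
  by (auto simp: cand_def blocked_def not_less)

lemma gis_reach_subset:
  "gis_reach V d g thr k i S \<Longrightarrow> S \<subseteq> V \<and> finite S \<and> card S = i \<and> i \<le> k"
  by (induction rule: gis_reach.induct) (auto simp: cand_def)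

lemma gis_out_full_or_stuck:
  "gis_out V d g thr k S \<Longrightarrow>
     \<exists>i. gis_reach V d g thr k i S \<and> (card S = k \<or> cand V d thr S = {})"
  unfolding gis_out_def using gis_reach_subset by blast

lemma gis_out_subset:
  "gis_out V d g thr k S \<Longrightarrow> S \<subseteq> V \<and> finite S \<and> card S \<le> k"
  using gis_out_full_or_stuck gis_reach_subset by blast

lemma gis_reach_separated:
  assumes "gis_reach V d g thr k i S" "Metric_space V d"
  shows "separated d thr S"
  using assms(1)
proof (induction rule: gis_reach.induct)
  case (step i S t)
  then have "\<forall>u\<in>S. thr \<le> d t u \<and> thr \<le> d u t"
    using Metric_space.commute[OF assms(2)] by (auto simp: cand_def)
  with step.IH show ?case by (auto simp: separated_def)
qed (simp add: separated_def)

lemma gis_out_separated: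
  "gis_out V d g thr k S \<Longrightarrow> Metric_space V d \<Longrightarrow> separated d thr S"
  using gis_out_full_or_stuck gis_reach_separated by blast

lemma greedy_choice_max_weight:
  fixes w :: "'a \<Rightarrow> real"
  assumes "finite S" "v \<in> cand V d thr S" "t \<notin> S"
    and "\<forall>v\<in>cand V d thr S. sum w (insert v S) - sum w S \<le> sum w (insert t S) - sum w S"
  shows "w v \<le> w t"
proof -
  have "v \<notin> S" using assms(2) by (simp add: cand_def)
  then show ?thesis using assms(4)[rule_format, OF assms(2)] assms(1,3) by simp
qed

lemma separated_near_unique:
  assumes "Metric_space V d" "Q \<subseteq> V" "t \<in> V" "separated d (2 * thr) Q"
    and "x \<in> Q" "y \<in> Q" "x = t \<or> d x t < thr" "y = t \<or> d y t < thr"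
  shows "x = y"
proof (rule ccontr)
  assume "x \<noteq> y"
  have "x \<in> V" "y \<in> V" using assms(2,5,6) by auto
  have "d x y \<le> d x t + d t y"
    using Metric_space.triangle[OF assms(1) \<open>x \<in> V\<close> \<open>t \<in> V\<close> \<open>y \<in> V\<close>] .
  also have "\<dots> < 2 * thr"
    using assms(7,8) \<open>x \<noteq> y\<close> Metric_space.commute[OF assms(1), of t y]
      Metric_space.zero[OF assms(1) assms(3) assms(3)] Metric_space.nonneg[OF assms(1)]
    by (smt (verit))
  finally show False
    using assms(4-6) \<open>x \<noteq> y\<close> unfolding separated_def by (meson not_le)
qed

lemma blocked_insert:
  assumes "Metric_space V d" "Q \<subseteq> V" "t \<in> V" "separated d (2 * thr) Q"
  shows "blocked Q d thr (insert t S) = blocked Q d thr S \<or>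
    (\<exists>x\<in>Q - blocked Q d thr S. blocked Q d thr (insert t S) = insert x (blocked Q d thr S))"
proof -
  define N where "N = {x\<in>Q. x = t \<or> d x t < thr}"
  have N: "blocked Q d thr (insert t S) = blocked Q d thr S \<union> N"
    by (auto simp: blocked_def N_def)
  have "x = y" if "x \<in> N" "y \<in> N" for x y
    using separated_near_unique[OF assms] that by (auto simp: N_def)
  moreover have "N \<subseteq> Q" by (auto simp: N_def)
  ultimately have "N = {} \<or> (\<exists>x\<in>Q. N = {x})" by blast
  then show ?thesis unfolding N by auto
qed

text \<open>The point of \<open>Q\<close> newly blocked by a pick \<open>t\<close> (there is at most one) was still a
  candidate when \<open>t\<close> was picked, so it weighs at most \<open>w t\<close> and is mapped to \<open>t\<close>.\<close>
lemma gis_reach_exchange: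
  fixes w :: "'a \<Rightarrow> real"
  assumes "gis_reach V d (\<lambda>X. sum w X) thr k i S"
    and "Metric_space V d" "Q \<subseteq> V" "separated d (2 * thr) Q"
  shows "\<exists>\<phi>. inj_on \<phi> (blocked Q d thr S) \<and> \<phi> ` blocked Q d thr S \<subseteq> S \<and>
     (\<forall>x\<in>blocked Q d thr S. w x \<le> w (\<phi> x)) \<and> (\<forall>x\<in>Q - blocked Q d thr S. \<forall>u\<in>S. w x \<le> w u)"
  using assms(1)
proof (induction rule: gis_reach.induct)
  case start
  then show ?case by (auto simp: blocked_def)
next
  case (step i S t)
  let ?B = "blocked Q d thr S"
  obtain \<phi> where \<phi>: "inj_on \<phi> ?B" "\<phi> ` ?B \<subseteq> S" "\<forall>x\<in>?B. w x \<le> w (\<phi> x)"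
    and light: "\<forall>x\<in>Q - ?B. \<forall>u\<in>S. w x \<le> w u"
    using step.IH by blast
  have "finite S" using gis_reach_subset[OF step.hyps(1)] by blast
  have "t \<in> V" "t \<notin> S" using step.hyps(3) by (auto simp: cand_def)
  have le_t: "w x \<le> w t" if "x \<in> Q - ?B" for x
    using greedy_choice_max_weight[OF \<open>finite S\<close> _ \<open>t \<notin> S\<close> step.hyps(4)]
      cand_iff_not_blocked[OF assms(3)] that by blast
  have light_insert: "\<forall>x\<in>Q - ?B. \<forall>u\<in>insert t S. w x \<le> w u" using light le_t by blast
  from blocked_insert[OF assms(2,3) \<open>t \<in> V\<close> assms(4)] show ?case
  proof
    assume "blocked Q d thr (insert t S) = ?B"
    then show ?thesis using \<phi> light_insert by (metis subset_insertI2)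
  next
    assume "\<exists>x\<in>Q - ?B. blocked Q d thr (insert t S) = insert x ?B"
    then obtain x0 where x0: "x0 \<in> Q - ?B" and new: "blocked Q d thr (insert t S) = insert x0 ?B"
      by blast
    have "inj_on (\<phi>(x0 := t)) (insert x0 ?B)"
      using \<phi>(1,2) x0 \<open>t \<notin> S\<close> by (auto simp: inj_on_def)
    moreover have "\<phi>(x0 := t) ` insert x0 ?B \<subseteq> insert t S"
      using \<phi>(2) x0 by auto
    moreover have "\<forall>x\<in>insert x0 ?B. w x \<le> w ((\<phi>(x0 := t)) x)"
      using \<phi>(3) x0 le_t[OF x0] by auto
    ultimately show ?thesis using light_insert unfolding new by blast
  qed
qed

lemma sum_le_sum_dominating_inj:
  fixes w :: "'a \<Rightarrow> real"
  assumes "finite T" "inj_on h Q" "h ` Q \<subseteq> T"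
    and "\<forall>x\<in>Q. w x \<le> w (h x)" "\<forall>t\<in>T. 0 \<le> w t"
  shows "sum w Q \<le> sum w T"
proof -
  have "finite Q" using assms(1-3) finite_imageD finite_subset by blast
  have "sum w Q \<le> sum (w \<circ> h) Q" using assms(4) by (intro sum_mono) auto
  also have "\<dots> = sum w (h ` Q)" by (simp add: sum.reindex[OF assms(2)])
  also have "\<dots> \<le> sum w T" using assms(1,3,5) by (intro sum_mono2) auto
  finally show ?thesis .
qed

lemma gis_out_sum_ge:
  fixes w :: "'a \<Rightarrow> real"
  assumes out: "gis_out V d (\<lambda>X. sum w X) thr k T"
    and "Metric_space V d" "finite V" "Q \<subseteq> V" "card Q \<le> k" "separated d (2 * thr) Q"
    and "\<forall>v\<in>V. 0 \<le> w v"
  shows "sum w Q \<le> sum w T"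
proof -
  obtain i where reach: "gis_reach V d (\<lambda>X. sum w X) thr k i T"
    and full_or_stuck: "card T = k \<or> cand V d thr T = {}"
    using gis_out_full_or_stuck[OF out] by blast
  have T: "T \<subseteq> V" "finite T" using gis_reach_subset[OF reach] by auto
  have "finite Q" using assms(3,4) finite_subset by blast
  define B where "B = blocked Q d thr T"
  have "B \<subseteq> Q" "finite B" using \<open>finite Q\<close> by (auto simp: B_def blocked_def)
  obtain \<phi> where \<phi>: "inj_on \<phi> B" "\<phi> ` B \<subseteq> T" "\<forall>x\<in>B. w x \<le> w (\<phi> x)"
    and light: "\<forall>x\<in>Q - B. \<forall>u\<in>T. w x \<le> w u"
    using gis_reach_exchange[OF reach assms(2,4,6)] unfolding B_def by blast
  have "card (Q - B) \<le> card (T - \<phi> ` B)"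
    using full_or_stuck
  proof
    assume "card T = k"
    then show ?thesis
      using card_Diff_subset[OF finite_imageI[OF \<open>finite B\<close>] \<phi>(2)] card_image[OF \<phi>(1)]
        card_Diff_subset[OF \<open>finite B\<close> \<open>B \<subseteq> Q\<close>] assms(5) by simp
  next
    assume "cand V d thr T = {}"
    then have "Q - B = {}" using cand_iff_not_blocked[OF assms(4)] unfolding B_def by blast
    then show ?thesis by (metis card.empty zero_le)
  qed
  then obtain \<psi> where \<psi>: "\<psi> ` (Q - B) \<subseteq> T - \<phi> ` B" "inj_on \<psi> (Q - B)"
    using card_le_inj \<open>finite Q\<close> T(2) by (metis finite_Diff)
  define h where "h x = (if x \<in> B then \<phi> x else \<psi> x)" for x
  have "inj_on h Q"
    using \<phi>(1) \<psi> \<open>B \<subseteq> Q\<close> unfolding h_def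
    by (smt (verit, ccfv_threshold) Diff_iff image_subset_iff inj_on_def set_eq_subset)
  moreover have "h ` Q \<subseteq> T" using \<phi>(2) \<psi>(1) unfolding h_def by auto
  moreover have "\<forall>x\<in>Q. w x \<le> w (h x)" using \<phi>(3) \<psi>(1) light unfolding h_def by auto
  ultimately show ?thesis
    using sum_le_sum_dominating_inj[OF T(2)] T(1) assms(7) by blast
qed

lemma two_le_card_obtains:
  assumes "2 \<le> card S"
  obtains u v where "u \<in> S" "v \<in> S" "u \<noteq> v"
  using assms card_le_Suc0_iff_eq[of S] card.infinite[of S] by force

lemma dist_le_dmax: "finite V \<Longrightarrow> u \<in> V \<Longrightarrow> v \<in> V \<Longrightarrow> d u v \<le> dmax V d"
  unfolding dmax_def by (rule Max_ge) (auto simp: finite_image_set2)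

lemma dmax_nonneg: "finite V \<Longrightarrow> V \<noteq> {} \<Longrightarrow> Metric_space V d \<Longrightarrow> 0 \<le> dmax V d"
  using dist_le_dmax Metric_space.nonneg by (metis all_not_in_conv order_trans)

lemma finite_pair_dists: "finite S \<Longrightarrow> finite {d u v | u v. u \<in> S \<and> v \<in> S \<and> u \<noteq> v}"
  by (rule finite_subset[of _ "(\<lambda>(u, v). d u v) ` (S \<times> S)"]) auto

lemma divers_ge:
  assumes "finite S" "separated d c S" "c \<le> dmax V d"
  shows "c \<le> divers V d S"
proof (cases "card S \<ge> 2")
  case True
  then obtain u v where "u \<in> S" "v \<in> S" "u \<noteq> v" by (rule two_le_card_obtains)
  then show ?thesis
    using True assms(2) finite_pair_dists[OF assms(1)]
    by (auto simp: divers_def separated_def intro!: Min.boundedI)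
qed (use assms(3) in \<open>simp add: divers_def\<close>)

lemma separated_divers: "finite S \<Longrightarrow> separated d (divers V d S) S"
proof (unfold separated_def, intro ballI impI)
  fix u v assume "finite S" "u \<in> S" "v \<in> S" "u \<noteq> v"
  moreover from this have "card S \<ge> 2"
    using card_mono[of S "{u, v}"] by auto
  ultimately show "divers V d S \<le> d u v"
    using finite_pair_dists[of S d] by (auto simp: divers_def intro!: Min_le)
qed

lemma divers_le_dmax:
  assumes "finite V" "S \<subseteq> V"
  shows "divers V d S \<le> dmax V d"
proof (cases "card S \<ge> 2")
  case True
  then obtain u v where "u \<in> S" "v \<in> S" "u \<noteq> v" by (rule two_le_card_obtains)
  moreover have "finite S" using finite_subset[OF assms(2,1)] .
  ultimately have "divers V d S \<le> d u v"
    using separated_divers[of S d V] unfolding separated_def by blast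
  also have "\<dots> \<le> dmax V d"
    using dist_le_dmax[OF assms(1)] assms(2) \<open>u \<in> S\<close> \<open>v \<in> S\<close> by blast
  finally show ?thesis .
qed (simp add: divers_def)

lemma divers_nonneg:
  assumes "finite V" "V \<noteq> {}" "Metric_space V d" "finite S"
  shows "0 \<le> divers V d S"
  using divers_ge[OF assms(4)] dmax_nonneg[OF assms(1-3)] Metric_space.nonneg[OF assms(3)]
  by (simp add: separated_def)

lemma OPT_attained:
  fixes g :: "'a set \<Rightarrow> real"
  assumes "finite V"
  shows "\<exists>S. S \<subseteq> V \<and> card S \<le> k \<and> OPT V d g lam k = fobj V d g lam S"
proof -
  define F where "F = {S. S \<subseteq> V \<and> card S \<le> k}"
  have "finite F" "{} \<in> F" using assms by (auto simp: F_def)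
  have "OPT V d g lam k = Max (fobj V d g lam ` F)"
    unfolding OPT_def F_def by (rule arg_cong[where f = Max]) blast
  also have "\<dots> \<in> fobj V d g lam ` F"
    using \<open>finite F\<close> \<open>{} \<in> F\<close> by (intro Max_in) auto
  finally show ?thesis unfolding F_def by blast
qed

lemma gist_loop_ge_start:
  "gist_loop V d g lam k S ds R \<Longrightarrow> fobj V d g lam S \<le> fobj V d g lam R"
  by (induction rule: gist_loop.induct) (auto split: if_splits)

lemma gist_loop_ge_candidates:
  "gist_loop V d g lam k S ds R \<Longrightarrow> thr \<in> set ds \<Longrightarrow>
     \<exists>T. gis_out V d g thr k T \<and> fobj V d g lam T \<le> fobj V d g lam R"
proof (induction rule: gist_loop.induct)
  case (cons thr' T S ds R)
  then show ?case
    using gist_loop_ge_start[OF cons.hyps(2)] by (auto split: if_splits)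
qed simp

lemma gist_loop_result:
  "gist_loop V d g lam k S ds R \<Longrightarrow> R = S \<or> (\<exists>thr. gis_out V d g thr k R)"
  by (induction rule: gist_loop.induct) (auto split: if_splits)

lemma finite_power_le:
  fixes x :: real
  assumes "1 < x"
  shows "finite {i::nat. x ^ i \<le> c}"
proof -
  obtain N where "c < x ^ N" using real_arch_pow[OF assms] by blast
  have "{i. x ^ i \<le> c} \<subseteq> {..<N}"
  proof
    fix i assume "i \<in> {i. x ^ i \<le> c}"
    moreover have "N \<le> i \<Longrightarrow> x ^ N \<le> x ^ i" using assms by (simp add: power_increasing)
    ultimately have "\<not> N \<le> i" using \<open>c < x ^ N\<close> by auto
    then show "i \<in> {..<N}" by simp
  qed
  then show ?thesis by (rule finite_subset) simp
qed

lemma finite_thresholds: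
  assumes "0 < eps"
  shows "finite (thresholds V d eps)"
proof -
  have "thresholds V d eps = (\<lambda>i. (1 + eps) ^ i * eps * dmax V d / 2) ` {i. (1 + eps) ^ i \<le> 2 / eps}"
    by (auto simp: thresholds_def)
  then show ?thesis using finite_power_le[of "1 + eps" "2 / eps"] assms by simp
qed

lemma thresholds_bounds:
  assumes "0 < eps" "0 \<le> dmax V d" "thr \<in> thresholds V d eps"
  shows "0 \<le> thr \<and> thr \<le> dmax V d"
proof -
  obtain i where i: "(1 + eps) ^ i \<le> 2 / eps" and thr: "thr = (1 + eps) ^ i * eps * dmax V d / 2"
    using assms(3) unfolding thresholds_def by blast
  have "(1 + eps) ^ i * eps \<le> 2" using i assms(1) by (simp add: field_simps)
  then have "(1 + eps) ^ i * eps * dmax V d \<le> 2 * dmax V d" using assms(2) by (rule mult_right_mono)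
  then show ?thesis using assms(1,2) unfolding thr by simp
qed

lemma ex_power_bracket:
  fixes x r :: real
  assumes "1 < x" "1 \<le> r"
  shows "\<exists>n. x ^ n \<le> r \<and> r < x ^ Suc n"
proof -
  obtain m where "r < x ^ m" using real_arch_pow[OF assms(1)] by blast
  then show ?thesis
    using ex_least_nat_less[of "\<lambda>n. r < x ^ n" m] assms(2) by (auto simp: not_less)
qed

lemma threshold_bracket:
  assumes "0 < eps" "0 < dmax V d" "eps * dmax V d < r" "r \<le> dmax V d"
  shows "\<exists>thr\<in>thresholds V d eps. 2 * thr \<le> r \<and> r \<le> 2 * thr * (1 + eps)"
proof -
  define D where "D = eps * dmax V d"
  have "0 < D" using assms(1,2) by (simp add: D_def)
  obtain i where i: "(1 + eps) ^ i \<le> r / D" "r / D < (1 + eps) ^ Suc i"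
    using ex_power_bracket[of "1 + eps" "r / D"] assms(1,3) \<open>0 < D\<close> D_def by auto
  have "r / D \<le> 2 / eps"
    using assms(1,2,4) \<open>0 < D\<close> unfolding D_def by (simp add: field_simps)
  with i(1) have "(1 + eps) ^ i * eps * dmax V d / 2 \<in> thresholds V d eps"
    unfolding thresholds_def by fastforce
  moreover have "(1 + eps) ^ i * D \<le> r" "r \<le> (1 + eps) ^ Suc i * D"
    using i \<open>0 < D\<close> by (simp_all add: field_simps)
  ultimately show ?thesis
    unfolding D_def by (intro bexI[of _ "(1 + eps) ^ i * eps * dmax V d / 2"]) (auto simp: algebra_simps)
qed

lemma gist_out_start:
  assumes "gist_out V d g lam k eps R"
  obtains S0 u v X where "gis_out V d g 0 k S0" "u \<in> V" "v \<in> V" "d u v = dmax V d"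
    "X = S0 \<or> (X = {u, v} \<and> 2 \<le> k)" "fobj V d g lam S0 \<le> fobj V d g lam X"
    "2 \<le> k \<Longrightarrow> fobj V d g lam {u, v} \<le> fobj V d g lam X"
    "gist_loop V d g lam k X (sorted_list_of_set (thresholds V d eps)) R"
  using assms unfolding gist_out_def by (smt (verit))

lemma gist_out_subset:
  assumes "gist_out V d g lam k eps R"
  shows "R \<subseteq> V \<and> card R \<le> k"
proof -
  obtain S0 u v X where "gis_out V d g 0 k S0" "u \<in> V" "v \<in> V" "X = S0 \<or> (X = {u, v} \<and> 2 \<le> k)"
    and loop: "gist_loop V d g lam k X (sorted_list_of_set (thresholds V d eps)) R"
    using assms by (rule gist_out_start)
  moreover have "card {u, v} \<le> 2" by (simp add: card_insert_if)
  ultimately have "X \<subseteq> V \<and> card X \<le> k" using gis_out_subset by fastforce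
  then show ?thesis using gist_loop_result[OF loop] gis_out_subset by blast
qed

lemma gist_out_ge_greedy:
  assumes "gist_out V d g lam k eps R"
  shows "\<exists>S0. gis_out V d g 0 k S0 \<and> fobj V d g lam S0 \<le> fobj V d g lam R"
proof -
  obtain S0 X where "gis_out V d g 0 k S0" "fobj V d g lam S0 \<le> fobj V d g lam X"
    and loop: "gist_loop V d g lam k X (sorted_list_of_set (thresholds V d eps)) R"
    using assms by (rule gist_out_start)
  then show ?thesis using gist_loop_ge_start[OF loop] by force
qed

lemma gist_out_ge_diametral:
  assumes "2 \<le> k" "gist_out V d g lam k eps R"
  shows "\<exists>u\<in>V. \<exists>v\<in>V. d u v = dmax V d \<and> fobj V d g lam {u, v} \<le> fobj V d g lam R"
proof -
  obtain u v X where "u \<in> V" "v \<in> V" "d u v = dmax V d"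
    "fobj V d g lam {u, v} \<le> fobj V d g lam X"
    and loop: "gist_loop V d g lam k X (sorted_list_of_set (thresholds V d eps)) R"
    using gist_out_start[OF assms(2)] assms(1) by metis
  then show ?thesis using gist_loop_ge_start[OF loop] by force
qed

lemma gist_out_ge_threshold:
  assumes "0 < eps" "thr \<in> thresholds V d eps" "gist_out V d g lam k eps R"
  shows "\<exists>T. gis_out V d g thr k T \<and> fobj V d g lam T \<le> fobj V d g lam R"
proof -
  obtain X where loop: "gist_loop V d g lam k X (sorted_list_of_set (thresholds V d eps)) R"
    using assms(3) by (rule gist_out_start)
  show ?thesis
    using gist_loop_ge_candidates[OF loop] assms(2) finite_thresholds[OF assms(1), of V d] by simp
qed

lemma two_thirds_le_of_le_one_plus:
  fixes eps opt x :: real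
  assumes "0 < eps" "0 \<le> opt" "opt \<le> (1 + eps) * x"
  shows "(2/3 - eps) * opt \<le> x"
proof -
  have "0 \<le> (1 + eps) * x" using assms(2,3) by linarith
  then have "0 \<le> x" using assms(1) by (simp add: zero_le_mult_iff)
  show ?thesis
  proof (cases "eps \<le> 2/3")
    case True
    have "(2/3 - eps) * opt \<le> (2/3 - eps) * ((1 + eps) * x)"
      using True assms(3) by (intro mult_left_mono) auto
    also have "\<dots> = (2/3 - eps/3 - eps\<^sup>2) * x" by (simp add: algebra_simps power2_eq_square)
    also have "\<dots> \<le> 1 * x" using \<open>0 \<le> x\<close> assms(1) zero_le_power2[of eps]
      by (intro mult_right_mono) linarith+
    finally show ?thesis by simp
  next
    case False
    then have "(2/3 - eps) * opt \<le> 0" using assms(2) by (intro mult_nonpos_nonneg) auto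
    then show ?thesis using \<open>0 \<le> x\<close> by linarith
  qed
qed

lemma two_thirds_le_of_threshold:
  fixes eps A B x y :: real
  assumes "0 < eps" "0 \<le> A" "0 \<le> B" "0 \<le> y" "A + y \<le> x" "B \<le> x" "B \<le> 2 * (1 + eps) * y"
  shows "(2/3 - eps) * (A + B) \<le> x"
proof -
  have "B * (1 - eps) \<le> 2 * y"
  proof (cases "eps \<le> 1")
    case True
    have "B * (1 - eps) \<le> 2 * (1 + eps) * y * (1 - eps)"
      using assms(7) True by (intro mult_right_mono) auto
    also have "\<dots> = 2 * y - 2 * y * eps\<^sup>2" by (simp add: algebra_simps power2_eq_square)
    also have "\<dots> \<le> 2 * y" using assms(4) by simp
    finally show ?thesis .
  next
    case False
    then have "B * (1 - eps) \<le> 0" using assms(3) by (intro mult_nonneg_nonpos) auto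
    then show ?thesis using assms(4) by linarith
  qed
  moreover have "0 \<le> eps * A" "0 \<le> eps * B" using assms(1-3) by simp_all
  ultimately show ?thesis using assms(5,6) by (simp add: algebra_simps)
qed

locale modular_mdms =
  fixes V :: "'a set" and d :: "'a \<Rightarrow> 'a \<Rightarrow> real" and w :: "'a \<Rightarrow> real" and lam :: real
  assumes finite_V: "finite V" and V_nonempty: "V \<noteq> {}" and metric: "Metric_space V d"
    and weights_nonneg: "\<forall>v\<in>V. 0 \<le> w v" and lam_nonneg: "0 \<le> lam"
begin

abbreviation f :: "'a set \<Rightarrow> real" where
  "f \<equiv> fobj V d (\<lambda>X. \<Sum>v\<in>X. w v) lam"

lemma f_eq: "f X = sum w X + lam * divers V d X"
  by (simp add: fobj_def)

lemma diameter_nonneg: "0 \<le> dmax V d"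
  using dmax_nonneg[OF finite_V V_nonempty metric] .

lemma lam_divers_nonneg: "X \<subseteq> V \<Longrightarrow> 0 \<le> lam * divers V d X"
  using divers_nonneg[OF finite_V V_nonempty metric] finite_subset[OF _ finite_V] lam_nonneg
  by simp

lemma sum_le_f: "X \<subseteq> V \<Longrightarrow> sum w X \<le> f X"
  using lam_divers_nonneg f_eq by simp

lemma sum_weights_nonneg: "X \<subseteq> V \<Longrightarrow> 0 \<le> sum w X"
  using weights_nonneg by (auto intro: sum_nonneg)

lemma f_nonneg: "X \<subseteq> V \<Longrightarrow> 0 \<le> f X"
  using sum_le_f sum_weights_nonneg by (meson order_trans)

lemma gist_greedy_bound:
  assumes "gist_out V d (\<lambda>X. \<Sum>v\<in>X. w v) lam k eps S" "Q \<subseteq> V" "card Q \<le> k"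
  obtains S0 where "S0 \<subseteq> V" "card S0 \<le> k" "sum w Q \<le> sum w S0" "f S0 \<le> f S"
proof -
  obtain S0 where S0: "gis_out V d (\<lambda>X. \<Sum>v\<in>X. w v) 0 k S0" "f S0 \<le> f S"
    using gist_out_ge_greedy[OF assms(1)] by blast
  have "separated d (2 * 0) Q" using Metric_space.nonneg[OF metric] by (simp add: separated_def)
  then have "sum w Q \<le> sum w S0"
    using gis_out_sum_ge[OF S0(1) metric finite_V assms(2,3)] weights_nonneg by blast
  moreover have "S0 \<subseteq> V" "card S0 \<le> k" using gis_out_subset[OF S0(1)] by auto
  ultimately show ?thesis using that S0(2) by blast
qed

lemma gist_weight_bound:
  assumes "gist_out V d (\<lambda>X. \<Sum>v\<in>X. w v) lam k eps S" "Q \<subseteq> V" "card Q \<le> k"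
  shows "sum w Q \<le> f S"
proof -
  obtain S0 where "S0 \<subseteq> V" "sum w Q \<le> sum w S0" "f S0 \<le> f S"
    using gist_greedy_bound[OF assms] .
  then show ?thesis using sum_le_f[of S0] by linarith
qed

text \<open>For \<open>k = 1\<close> all feasible sets have diversity \<open>dmax\<close>, so the greedy set is optimal.\<close>
lemma gist_optimal_if_k_eq_1:
  assumes "gist_out V d (\<lambda>X. \<Sum>v\<in>X. w v) lam 1 eps S" "Q \<subseteq> V" "card Q \<le> 1"
  shows "f Q \<le> f S"
proof -
  obtain S0 where "card S0 \<le> 1" "sum w Q \<le> sum w S0" "f S0 \<le> f S"
    using gist_greedy_bound[OF assms] .
  moreover have "f Q = sum w Q + lam * dmax V d" "f S0 = sum w S0 + lam * dmax V d"
    using \<open>card S0 \<le> 1\<close> assms(3) f_eq unfolding divers_def by simp_all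
  ultimately show ?thesis by linarith
qed

lemma gist_diameter_bound:
  assumes "2 \<le> k" "gist_out V d (\<lambda>X. \<Sum>v\<in>X. w v) lam k eps S"
  shows "lam * dmax V d \<le> f S"
proof -
  obtain u v where "u \<in> V" "v \<in> V" "d u v = dmax V d" "f {u, v} \<le> f S"
    using gist_out_ge_diametral[OF assms] by blast
  moreover from this have "separated d (dmax V d) {u, v}"
    using Metric_space.commute[OF metric, of u v] by (auto simp: separated_def)
  then have "lam * dmax V d \<le> lam * divers V d {u, v}"
    using divers_ge[of "{u, v}" d "dmax V d" V] lam_nonneg by (simp add: mult_left_mono)
  moreover have "0 \<le> sum w {u, v}" using sum_weights_nonneg \<open>u \<in> V\<close> \<open>v \<in> V\<close> by simp
  ultimately show ?thesis using f_eq[of "{u, v}"] by linarith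
qed

lemma gist_threshold_bound:
  assumes "0 < eps" "thr \<in> thresholds V d eps" "gist_out V d (\<lambda>X. \<Sum>v\<in>X. w v) lam k eps S"
    and "Q \<subseteq> V" "card Q \<le> k" "separated d (2 * thr) Q"
  shows "sum w Q + lam * thr \<le> f S"
proof -
  obtain T where T: "gis_out V d (\<lambda>X. \<Sum>v\<in>X. w v) thr k T" "f T \<le> f S"
    using gist_out_ge_threshold[OF assms(1-3)] by blast
  have "sum w Q \<le> sum w T"
    using gis_out_sum_ge[OF T(1) metric finite_V assms(4-6)] weights_nonneg by blast
  moreover have "thr \<le> divers V d T"
    using divers_ge gis_out_subset[OF T(1)] gis_out_separated[OF T(1) metric]
      thresholds_bounds[OF assms(1) diameter_nonneg assms(2)] by blast
  then have "lam * thr \<le> lam * divers V d T" using lam_nonneg by (rule mult_left_mono)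
  ultimately show ?thesis using T(2) f_eq[of T] by linarith
qed

lemma gist_small_diversity_bound:
  assumes "2 \<le> k" "gist_out V d (\<lambda>X. \<Sum>v\<in>X. w v) lam k eps S" "Q \<subseteq> V" "card Q \<le> k"
    and "divers V d Q \<le> eps * dmax V d" "0 < eps"
  shows "f Q \<le> (1 + eps) * f S"
proof -
  have "lam * divers V d Q \<le> eps * (lam * dmax V d)"
    using mult_left_mono[OF assms(5) lam_nonneg] by (simp add: algebra_simps)
  also have "\<dots> \<le> eps * f S"
    using gist_diameter_bound[OF assms(1,2)] assms(6) by (simp add: mult_left_mono)
  finally show ?thesis
    using gist_weight_bound[OF assms(2-4)] f_eq[of Q] by (simp add: algebra_simps)
qed

lemma gist_large_diversity_bound:
  assumes "2 \<le> k" "gist_out V d (\<lambda>X. \<Sum>v\<in>X. w v) lam k eps S" "Q \<subseteq> V" "card Q \<le> k"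
    and "eps * dmax V d < divers V d Q" "0 < eps"
  shows "(2/3 - eps) * f Q \<le> f S"
proof -
  let ?r = "divers V d Q"
  have "finite Q" using assms(3) finite_V finite_subset by blast
  have "?r \<le> dmax V d" using divers_le_dmax[OF finite_V assms(3)] .
  then have "0 < dmax V d" using assms(5,6) diameter_nonneg by (smt (verit) mult_nonneg_nonneg)
  then obtain thr where thr: "thr \<in> thresholds V d eps" "2 * thr \<le> ?r" "?r \<le> 2 * thr * (1 + eps)"
    using threshold_bracket[OF assms(6) _ assms(5) \<open>?r \<le> dmax V d\<close>] by blast
  have "0 \<le> thr" using thresholds_bounds[OF assms(6) diameter_nonneg thr(1)] by blast
  have "separated d (2 * thr) Q" using separated_mono[OF separated_divers[OF \<open>finite Q\<close>] thr(2)] .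
  then have "sum w Q + lam * thr \<le> f S"
    using gist_threshold_bound[OF assms(6) thr(1) assms(2-4)] by blast
  moreover have "lam * ?r \<le> f S"
    using mult_left_mono[OF \<open>?r \<le> dmax V d\<close> lam_nonneg] gist_diameter_bound[OF assms(1,2)] by linarith
  moreover have "lam * ?r \<le> 2 * (1 + eps) * (lam * thr)"
    using mult_left_mono[OF thr(3) lam_nonneg] by (simp add: algebra_simps)
  moreover have "0 \<le> lam * thr" using lam_nonneg \<open>0 \<le> thr\<close> by simp
  ultimately have "(2/3 - eps) * (sum w Q + lam * ?r) \<le> f S"
    using two_thirds_le_of_threshold[OF assms(6)] sum_weights_nonneg[OF assms(3)]
      lam_divers_nonneg[OF assms(3)] by blast
  then show ?thesis using f_eq[of Q] by simp
qed

lemma gist_approximation: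
  assumes "1 \<le> k" "0 < eps" "gist_out V d (\<lambda>X. \<Sum>v\<in>X. w v) lam k eps S"
  shows "(2/3 - eps) * OPT V d (\<lambda>X. \<Sum>v\<in>X. w v) lam k \<le> f S"
proof -
  obtain Q where Q: "Q \<subseteq> V" "card Q \<le> k" and opt: "OPT V d (\<lambda>X. \<Sum>v\<in>X. w v) lam k = f Q"
    using OPT_attained[OF finite_V] by blast
  have "0 \<le> f S" "0 \<le> f Q" using gist_out_subset[OF assms(3)] Q(1) f_nonneg by blast+
  consider "k = 1" | "2 \<le> k" "divers V d Q \<le> eps * dmax V d" | "2 \<le> k" "eps * dmax V d < divers V d Q"
    using assms(1) by linarith
  then show ?thesis
  proof cases
    case 1
    then have "f Q \<le> f S" using gist_optimal_if_k_eq_1 assms(3) Q by simp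
    moreover have "0 \<le> eps * f S" using assms(2) \<open>0 \<le> f S\<close> by simp
    ultimately have "f Q \<le> (1 + eps) * f S" by (simp add: algebra_simps)
    then show ?thesis unfolding opt using two_thirds_le_of_le_one_plus[OF assms(2) \<open>0 \<le> f Q\<close>] by blast
  next
    case 2
    then show ?thesis unfolding opt
      using two_thirds_le_of_le_one_plus[OF assms(2) \<open>0 \<le> f Q\<close>] gist_small_diversity_bound assms Q by blast
  next
    case 3
    then show ?thesis unfolding opt using gist_large_diversity_bound assms Q by blast
  qed
qed

end

theorem theorem3p3:
  fixes V :: "'a set" and d :: "'a \<Rightarrow> 'a \<Rightarrow> real" and w :: "'a \<Rightarrow> real"
    and lam :: real and k :: nat and eps :: real and S :: "'a set"
  assumes "finite V" and "V \<noteq> {}"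
    and "Metric_space V d"
    and "\<forall>v\<in>V. w v \<ge> 0"
    and "lam \<ge> 0" and "k \<ge> 1" and "eps > 0"
    and "gist_out V d (\<lambda>X. \<Sum>v\<in>X. w v) lam k eps S"
  shows "S \<subseteq> V \<and> card S \<le> k \<and>
         fobj V d (\<lambda>X. \<Sum>v\<in>X. w v) lam S \<ge> (2/3 - eps) * OPT V d (\<lambda>X. \<Sum>v\<in>X. w v) lam k"
proof -
  interpret modular_mdms V d w lam
    using assms(1-5) by (simp add: modular_mdms_def)
  show ?thesis using gist_out_subset[OF assms(8)] gist_approximation[OF assms(6-8)] by simp
qed

end
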